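(* The mapping class group $\Gamma_2$ of the closed orientable genus 2 surface has the presentation $$\Gamma_2=\langle b_1,\dots,b_5 \mid b_ib_j=b_jb_i\ (|i-j|\geq 2),\ b_ib_{i+1}b_i=b_{i+1}b_ib_{i+1}\ (i\leq 4),\ (b_1b_2b_3b_4b_5)^6=1,\ [h_6,b_i]=1\ (1\le i\le 5),\ h_6^2=1\rangle,$$ where $h_6=b_5b_4b_3b_2b_1^2b_2b_3b_4b_5$.
   Context: Here $b_1,\dots,b_5$ correspond to the Dehn twists along a chain of simple closed curves $c_1,\dots,c_5$ on the genus 2 surface with $c_i,c_{i+1}$ meeting transversally in one point and $c_i,c_j$ disjoint for $|i-j|\ge 2$. It is known (Birman–Hilden) that $\Gamma_2=\langle b_1,\dots,b_5\mid \text{braid relations},\ (b_1b_2b_3)^4=b_5^2,\ [h_6,b_1]=1,\ h_6^2=1\rangle$, with $h_6$ the hyperelliptic involution. *)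

theory Defs
  imports "HOL-Algebra.Group"
begin

definition h6 :: "('a, 'm) monoid_scheme \<Rightarrow> (nat \<Rightarrow> 'a) \<Rightarrow> 'a" where
  "h6 G b = b 5 \<otimes>\<^bsub>G\<^esub> b 4 \<otimes>\<^bsub>G\<^esub> b 3 \<otimes>\<^bsub>G\<^esub> b 2 \<otimes>\<^bsub>G\<^esub> b 1 \<otimes>\<^bsub>G\<^esub> b 1
      \<otimes>\<^bsub>G\<^esub> b 2 \<otimes>\<^bsub>G\<^esub> b 3 \<otimes>\<^bsub>G\<^esub> b 4 \<otimes>\<^bsub>G\<^esub> b 5"

definition braid_rels :: "('a, 'm) monoid_scheme \<Rightarrow> (nat \<Rightarrow> 'a) \<Rightarrow> bool" where
  "braid_rels G b \<longleftrightarrow>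
     (\<forall>i\<in>{1..5}. \<forall>j\<in>{1..5}. (i + 2 \<le> j \<or> j + 2 \<le> i) \<longrightarrow>
         b i \<otimes>\<^bsub>G\<^esub> b j = b j \<otimes>\<^bsub>G\<^esub> b i)
   \<and> (\<forall>i\<in>{1..4}. b i \<otimes>\<^bsub>G\<^esub> b (i+1) \<otimes>\<^bsub>G\<^esub> b i
                  = b (i+1) \<otimes>\<^bsub>G\<^esub> b i \<otimes>\<^bsub>G\<^esub> b (i+1))"

(* Birman--Hilden relations (the known presentation of Gamma_2) *)
definition BH_rels :: "('a, 'm) monoid_scheme \<Rightarrow> (nat \<Rightarrow> 'a) \<Rightarrow> bool" where
  "BH_rels G b \<longleftrightarrow> braid_rels G b
   \<and> (b 1 \<otimes>\<^bsub>G\<^esub> b 2 \<otimes>\<^bsub>G\<^esub> b 3) [^]\<^bsub>G\<^esub> (4::nat) = b 5 [^]\<^bsub>G\<^esub> (2::nat)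
   \<and> h6 G b \<otimes>\<^bsub>G\<^esub> b 1 = b 1 \<otimes>\<^bsub>G\<^esub> h6 G b
   \<and> h6 G b [^]\<^bsub>G\<^esub> (2::nat) = \<one>\<^bsub>G\<^esub>"

definition new_rels :: "('a, 'm) monoid_scheme \<Rightarrow> (nat \<Rightarrow> 'a) \<Rightarrow> bool" where
  "new_rels G b \<longleftrightarrow> braid_rels G b
   \<and> (b 1 \<otimes>\<^bsub>G\<^esub> b 2 \<otimes>\<^bsub>G\<^esub> b 3 \<otimes>\<^bsub>G\<^esub> b 4 \<otimes>\<^bsub>G\<^esub> b 5) [^]\<^bsub>G\<^esub> (6::nat) = \<one>\<^bsub>G\<^esub>
   \<and> (\<forall>i\<in>{1..5}. h6 G b \<otimes>\<^bsub>G\<^esub> b i = b i \<otimes>\<^bsub>G\<^esub> h6 G b)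
   \<and> h6 G b [^]\<^bsub>G\<^esub> (2::nat) = \<one>\<^bsub>G\<^esub>"

end

theory Submission
  imports Defs
begin

text \<open>
  Most of the work is done by braid relations alone, which we verify with a certified rewriting
  procedure on positive braid words. Modulo braid relations, \<open>(b1 b2 b3 b4 b5)^6 = (b1 b2 b3 b4)^5 h6\<close>
  and \<open>(b1 b2 b3 b4)^5 = (b1 b2 b3)^4 g\<close>, where \<open>g = b4 b3 b2 b1 b1 b2 b3 b4\<close> and \<open>h6 = b5 g b5\<close>;
  moreover \<open>h6\<close> commutes with \<open>b1, ..., b4\<close>. Hence, given \<open>h6^2 = 1\<close>, the relation
  \<open>(b1 ... b5)^6 = 1\<close> says \<open>(b1 b2 b3 b4)^5 = h6\<close>, and then both the chain relation
  \<open>(b1 b2 b3)^4 = b5^2\<close> and \<open>[h6, b5] = 1\<close> say that \<open>b5\<close> commutes with \<open>g\<close>.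
  It remains to derive \<open>(b1 ... b5)^6 = 1\<close> from the chain relation: conjugating it by
  \<open>(b1 ... b5)^2\<close> gives \<open>(b3 b4 b5)^4 = b1^2\<close>, and the two relations reduce a word
  braid equivalent to \<open>b1^2 b5^2 (b1 ... b5)^6\<close> to \<open>b5^2 b1^2\<close>.
\<close>

text \<open>\<open>pull_front n f a w\<close> moves the letter \<open>a\<close> to the front of \<open>w\<close> using braid relations
  only; the fuel \<open>f\<close> makes the nested recursion terminate.\<close>

fun pull_front :: "nat \<Rightarrow> nat \<Rightarrow> nat \<Rightarrow> nat list \<Rightarrow> nat list option" where
  "pull_front n 0 a w = None"
| "pull_front n (Suc f) a [] = None"
| "pull_front n (Suc f) a (c # u) =
     (if c = a then Some u
      else if a \<notin> {1..n} \<or> c \<notin> {1..n} then None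
      else if a + 2 \<le> c \<or> c + 2 \<le> a then map_option (Cons c) (pull_front n f a u)
      else Option.bind (pull_front n f a u)
             (\<lambda>u'. map_option (\<lambda>u''. c # a # u'') (pull_front n f c u')))"

fun braid_eq_check :: "nat \<Rightarrow> nat list \<Rightarrow> nat list \<Rightarrow> bool" where
  "braid_eq_check n u [] \<longleftrightarrow> u = []"
| "braid_eq_check n u (a # v) \<longleftrightarrow>
     (case pull_front n (length u) a u of None \<Rightarrow> False | Some u' \<Rightarrow> braid_eq_check n u' v)"

definition full_twist_word :: "nat \<Rightarrow> nat list" where
  "full_twist_word k = concat (replicate (Suc k) [1..<Suc k])"

text \<open>The pure braid in which strand \<open>k + 1\<close> encircles strands \<open>1, ..., k\<close>.\<close>

definition loop_word :: "nat \<Rightarrow> nat list" where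
  "loop_word k = rev [1..<Suc k] @ [1..<Suc k]"

locale braid_monoid = monoid G for G :: "('a, 'm) monoid_scheme" (structure) +
  fixes n :: nat and b :: "nat \<Rightarrow> 'a"
  assumes b_closed: "i \<in> {1..n} \<Longrightarrow> b i \<in> carrier G"
    and far_commute: "\<lbrakk>i \<in> {1..n}; j \<in> {1..n}; i + 2 \<le> j\<rbrakk> \<Longrightarrow> b i \<otimes> b j = b j \<otimes> b i"
    and braid: "\<lbrakk>i \<in> {1..n}; Suc i \<in> {1..n}\<rbrakk> \<Longrightarrow>
                  b i \<otimes> b (Suc i) \<otimes> b i = b (Suc i) \<otimes> b i \<otimes> b (Suc i)"
begin

text \<open>Letters outside \<open>1..n\<close> denote the identity, so that every word lies in the carrier.\<close>

definition gen :: "nat \<Rightarrow> 'a" where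
  "gen i = (if i \<in> {1..n} then b i else \<one>)"

definition word :: "nat list \<Rightarrow> 'a" where
  "word w = foldr (\<lambda>i x. gen i \<otimes> x) w \<one>"

lemma gen_closed [simp]: "gen i \<in> carrier G"
  by (simp add: gen_def b_closed)

lemma word_Nil [simp]: "word [] = \<one>"
  by (simp add: word_def)

lemma word_Cons: "word (i # w) = gen i \<otimes> word w"
  by (simp add: word_def)

lemma word_closed [simp]: "word w \<in> carrier G"
  by (induction w) (simp_all add: word_Cons)

lemma word_append: "word (u @ v) = word u \<otimes> word v"
  by (induction u) (simp_all add: word_Cons m_assoc)

lemma word_power: "word w [^] k = word (concat (replicate k w))"
proof (induction k)
  case (Suc k)
  have "word w [^] Suc k = word w \<otimes> word w [^] k"
    by (rule nat_pow_Suc2) simp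
  with Suc.IH show ?case
    by (simp add: word_append)
qed simp

lemma gen_far_commute:
  "\<lbrakk>a \<in> {1..n}; c \<in> {1..n}; a + 2 \<le> c \<or> c + 2 \<le> a\<rbrakk> \<Longrightarrow> gen c \<otimes> gen a = gen a \<otimes> gen c"
  using far_commute[of a c] far_commute[of c a] by (auto simp: gen_def)

lemma gen_braid:
  assumes "a \<in> {1..n}" "c \<in> {1..n}" "a \<noteq> c" "\<not> (a + 2 \<le> c \<or> c + 2 \<le> a)"
  shows "gen c \<otimes> gen a \<otimes> gen c = gen a \<otimes> gen c \<otimes> gen a"
proof -
  have "c = Suc a \<or> a = Suc c"
    using assms(3,4) by linarith
  then show ?thesis
    using assms(1,2) braid by (auto simp: gen_def)
qed

lemma word_pull_front: "pull_front n f a w = Some w' \<Longrightarrow> word w = gen a \<otimes> word w'"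
proof (induction f arbitrary: a w w')
  case 0
  then show ?case by simp
next
  case (Suc f)
  obtain c u where w: "w = c # u"
    using Suc.prems by (cases w) auto
  show ?case
  proof (cases "c = a")
    case True
    with Suc.prems w show ?thesis by (simp add: word_Cons)
  next
    case False
    with Suc.prems w have range: "a \<in> {1..n}" "c \<in> {1..n}"
      by (auto split: if_splits)
    show ?thesis
    proof (cases "a + 2 \<le> c \<or> c + 2 \<le> a")
      case True
      with Suc.prems w \<open>c \<noteq> a\<close> range obtain u' where u': "pull_front n f a u = Some u'"
        and "w' = c # u'"
        by auto
      then have "word w = (gen c \<otimes> gen a) \<otimes> word u'"
        using Suc.IH[OF u'] w by (simp add: word_Cons m_assoc)
      also have "\<dots> = (gen a \<otimes> gen c) \<otimes> word u'"
        using True range by (simp add: gen_far_commute)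
      finally show ?thesis
        using \<open>w' = c # u'\<close> by (simp add: word_Cons m_assoc)
    next
      case False
      with Suc.prems w \<open>c \<noteq> a\<close> range obtain u' u'' where u': "pull_front n f a u = Some u'"
        and u'': "pull_front n f c u' = Some u''" and "w' = c # a # u''"
        by (auto split: bind_splits)
      then have "word w = (gen c \<otimes> gen a \<otimes> gen c) \<otimes> word u''"
        using Suc.IH[OF u'] Suc.IH[OF u''] w by (simp add: word_Cons m_assoc)
      also have "\<dots> = (gen a \<otimes> gen c \<otimes> gen a) \<otimes> word u''"
        using False range \<open>c \<noteq> a\<close> by (simp add: gen_braid)
      finally show ?thesis
        using \<open>w' = c # a # u''\<close> by (simp add: word_Cons m_assoc)
    qed
  qed
qed

lemma word_loop_word_Suc:
  "word (loop_word (Suc k)) = gen (Suc k) \<otimes> word (loop_word k) \<otimes> gen (Suc k)"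
  by (simp add: loop_word_def word_append word_Cons m_assoc)

lemma braid_eq_check_sound: "braid_eq_check n u v \<Longrightarrow> word u = word v"
proof (induction v arbitrary: u)
  case Nil
  then show ?case by simp
next
  case (Cons a v)
  then obtain u' where "pull_front n (length u) a u = Some u'" and "braid_eq_check n u' v"
    by (auto split: option.splits)
  with Cons.IH show ?case
    by (simp add: word_pull_front word_Cons)
qed

end

lemma braid_monoid_if_braid_rels:
  assumes "monoid G" and "\<forall>i\<in>{1..5}. b i \<in> carrier G" and "braid_rels G b"
  shows "braid_monoid G 5 b"
  using assms unfolding braid_monoid_def braid_monoid_axioms_def braid_rels_def by auto

locale braid6 = group G + braid_monoid G 5 b for G :: "('a, 'm) monoid_scheme" (structure) and b
begin

lemma word_loop_word_5_commute:
  assumes "i \<in> {1..4}"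
  shows "word (loop_word 5) \<otimes> gen i = gen i \<otimes> word (loop_word 5)"
proof -
  have "i = 1 \<or> i = 2 \<or> i = 3 \<or> i = 4"
    using assms by auto
  then have "braid_eq_check 5 (loop_word 5 @ [i]) ([i] @ loop_word 5)"
    by (elim disjE; hypsubst; code_simp)
  then have "word (loop_word 5 @ [i]) = word ([i] @ loop_word 5)"
    by (rule braid_eq_check_sound)
  then show ?thesis
    by (simp add: word_append word_Cons)
qed

lemma word_full_twist_word_5:
  "word (full_twist_word 5) = word (full_twist_word 4) \<otimes> word (loop_word 5)"
  unfolding word_append[symmetric] by (rule braid_eq_check_sound) code_simp

lemma word_full_twist_word_4:
  "word (full_twist_word 4) = word (full_twist_word 3) \<otimes> word (loop_word 4)"
  unfolding word_append[symmetric] by (rule braid_eq_check_sound) code_simp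

lemma shifted_chain_relation:
  assumes "word (full_twist_word 3) = word [5,5]"
  shows "word (map ((+) 2) (full_twist_word 3)) = word [1,1]"
proof -
  define d where "d = word ([1..<6] @ [1..<6])"
  \<comment> \<open>Conjugation by \<open>d = (b1 ... b5)^2\<close> shifts \<open>bi\<close> to \<open>b(i+2)\<close> for \<open>i \<le> 3\<close> and carries \<open>b5^2\<close> to \<open>b1^2\<close>.\<close>
  have "word (map ((+) 2) (full_twist_word 3)) \<otimes> d = d \<otimes> word (full_twist_word 3)"
    unfolding d_def word_append[symmetric] by (rule braid_eq_check_sound) code_simp
  also have "\<dots> = d \<otimes> word [5,5]"
    using assms by simp
  also have "\<dots> = word [1,1] \<otimes> d"
    unfolding d_def word_append[symmetric] by (rule braid_eq_check_sound) code_simp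
  finally show ?thesis
    by (simp add: d_def)
qed

lemma full_twist_trivial_if_chain_relation:
  assumes chain: "word (full_twist_word 3) = word [5,5]"
  shows "word (full_twist_word 5) = \<one>"
proof -
  \<comment> \<open>Two copies of \<open>(b1 b2 b3)^4\<close> appear; replacing them by \<open>b5^2\<close> leaves \<open>b5^2 (b3 b4 b5)^4\<close>.\<close>
  have "word [1,1,5,5] \<otimes> word (full_twist_word 5) =
      word (full_twist_word 3) \<otimes> word [5,5,4,3,5,4] \<otimes> word (full_twist_word 3) \<otimes> word [4,3,5,4]"
    unfolding word_append[symmetric] by (rule braid_eq_check_sound) code_simp
  also have "\<dots> = word [5,5] \<otimes> word [5,5,4,3,5,4,5,5,4,3,5,4]"
    using chain by (simp flip: word_append)
  also have "\<dots> = word [5,5] \<otimes> word (map ((+) 2) (full_twist_word 3))"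
  proof -
    have "word [5,5,4,3,5,4,5,5,4,3,5,4] = word (map ((+) 2) (full_twist_word 3))"
      by (rule braid_eq_check_sound) code_simp
    then show ?thesis by simp
  qed
  also have "\<dots> = word [5,5] \<otimes> word [1,1]"
    using shifted_chain_relation[OF chain] by simp
  also have "\<dots> = word [1,1,5,5]"
    unfolding word_append[symmetric] by (rule braid_eq_check_sound) code_simp
  finally show ?thesis
    by simp
qed

lemma full_twist_trivial_iff:
  assumes "word (loop_word 5) \<otimes> word (loop_word 5) = \<one>"
  shows "word (full_twist_word 5) = \<one> \<longleftrightarrow> word (full_twist_word 4) = word (loop_word 5)"
proof -
  have "word (full_twist_word 5) = \<one> \<longleftrightarrow>
      word (full_twist_word 4) \<otimes> word (loop_word 5) = word (loop_word 5) \<otimes> word (loop_word 5)"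
    using assms by (simp add: word_full_twist_word_5)
  also have "\<dots> \<longleftrightarrow> word (full_twist_word 4) = word (loop_word 5)"
    by simp
  finally show ?thesis .
qed

lemma chain_relation_iff_loop_commute:
  assumes "word (full_twist_word 4) = word (loop_word 5)"
  shows "word (full_twist_word 3) = word [5,5] \<longleftrightarrow>
    word (loop_word 5) \<otimes> gen 5 = gen 5 \<otimes> word (loop_word 5)"
proof -
  \<comment> \<open>Both sides say that \<open>s = b5\<close> commutes with \<open>g = b4 b3 b2 b1 b1 b2 b3 b4\<close>.\<close>
  define t g s where "t = word (full_twist_word 3)" and "g = word (loop_word 4)" and "s = gen 5"
  have closed: "t \<in> carrier G" "g \<in> carrier G" "s \<in> carrier G"
    by (simp_all add: t_def g_def s_def)
  have loop: "word (loop_word 5) = s \<otimes> g \<otimes> s"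
    using word_loop_word_Suc[of 4] by (simp add: g_def s_def)
  have twist: "t \<otimes> g = s \<otimes> g \<otimes> s"
    using assms by (simp add: word_full_twist_word_4 loop t_def g_def)
  have "t = word [5,5] \<longleftrightarrow> t \<otimes> g = s \<otimes> s \<otimes> g"
    using closed by (simp add: s_def word_Cons)
  also have "\<dots> \<longleftrightarrow> s \<otimes> (g \<otimes> s) = s \<otimes> (s \<otimes> g)"
    using closed by (simp add: twist m_assoc)
  also have "\<dots> \<longleftrightarrow> g \<otimes> s = s \<otimes> g"
    using closed by simp
  also have "\<dots> \<longleftrightarrow> s \<otimes> (g \<otimes> s \<otimes> s) = s \<otimes> (s \<otimes> g \<otimes> s)"
    using closed by simp
  also have "\<dots> \<longleftrightarrow> s \<otimes> g \<otimes> s \<otimes> s = s \<otimes> (s \<otimes> g \<otimes> s)"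
    using closed by (simp add: m_assoc)
  finally show ?thesis
    by (simp add: loop t_def s_def)
qed

lemma chain_relation_iff:
  assumes "word (loop_word 5) \<otimes> word (loop_word 5) = \<one>"
  shows "word (full_twist_word 3) = word [5,5] \<longleftrightarrow>
    word (full_twist_word 5) = \<one> \<and> word (loop_word 5) \<otimes> gen 5 = gen 5 \<otimes> word (loop_word 5)"
  using full_twist_trivial_if_chain_relation full_twist_trivial_iff[OF assms]
    chain_relation_iff_loop_commute by blast

lemma b_eq_word: "i \<in> {1..5} \<Longrightarrow> b i = word [i]"
  by (simp add: word_Cons gen_def b_closed)

lemma h6_eq_word: "h6 G b = word (loop_word 5)"
proof -
  have "loop_word 5 = [5,4,3,2,1,1,2,3,4,5]"
    by code_simp
  then show ?thesis
    unfolding h6_def by (simp add: b_eq_word flip: word_append)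
qed

lemma h6_squared: "h6 G b [^] (2::nat) = word (loop_word 5) \<otimes> word (loop_word 5)"
  by (simp add: h6_eq_word numeral_2_eq_2)

lemma BH_rels_iff:
  "BH_rels G b \<longleftrightarrow> braid_rels G b \<and> word (full_twist_word 3) = word [5,5] \<and>
     word (loop_word 5) \<otimes> word (loop_word 5) = \<one>"
proof -
  have "full_twist_word 3 = concat (replicate 4 [1,2,3])"
    by code_simp
  then have "(b 1 \<otimes> b 2 \<otimes> b 3) [^] (4::nat) = word (full_twist_word 3)"
    by (simp add: b_eq_word word_power flip: word_append)
  moreover have "b 5 [^] (2::nat) = word [5,5]"
    by (simp add: b_eq_word numeral_2_eq_2 flip: word_append)
  moreover have "h6 G b \<otimes> b 1 = b 1 \<otimes> h6 G b"
    using word_loop_word_5_commute[of 1] by (simp add: h6_eq_word gen_def)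
  ultimately show ?thesis
    unfolding BH_rels_def h6_squared by simp
qed

lemma new_rels_iff:
  "new_rels G b \<longleftrightarrow> braid_rels G b \<and> word (full_twist_word 5) = \<one> \<and>
     word (loop_word 5) \<otimes> gen 5 = gen 5 \<otimes> word (loop_word 5) \<and>
     word (loop_word 5) \<otimes> word (loop_word 5) = \<one>"
proof -
  have "full_twist_word 5 = concat (replicate 6 [1,2,3,4,5])"
    by code_simp
  then have "(b 1 \<otimes> b 2 \<otimes> b 3 \<otimes> b 4 \<otimes> b 5) [^] (6::nat) = word (full_twist_word 5)"
    by (simp add: b_eq_word word_power flip: word_append)
  moreover have "(\<forall>i\<in>{1..5}. h6 G b \<otimes> b i = b i \<otimes> h6 G b) \<longleftrightarrow>
      word (loop_word 5) \<otimes> gen 5 = gen 5 \<otimes> word (loop_word 5)"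
  proof -
    have "{1..5} = insert 5 {1..4::nat}"
      by auto
    moreover have "\<forall>i\<in>{1..4}. h6 G b \<otimes> b i = b i \<otimes> h6 G b"
      using word_loop_word_5_commute by (simp add: h6_eq_word gen_def)
    ultimately show ?thesis
      by (simp add: h6_eq_word gen_def)
  qed
  ultimately show ?thesis
    unfolding new_rels_def h6_squared by simp
qed

end

theorem lemma2p14:
  fixes G :: "('a, 'm) monoid_scheme" and b :: "nat \<Rightarrow> 'a"
  assumes "group G"
    and "\<forall>i\<in>{1..5}. b i \<in> carrier G"
  shows "BH_rels G b \<longleftrightarrow> new_rels G b"
proof (cases "braid_rels G b")
  case False
  then show ?thesis
    by (simp add: BH_rels_def new_rels_def)
next
  case True
  interpret braid6 G b
    unfolding braid6_def
    using assms braid_monoid_if_braid_rels[OF group.is_monoid[OF assms(1)] assms(2) True] by blast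
  show ?thesis
    using chain_relation_iff by (auto simp: BH_rels_iff new_rels_iff)
qed

end
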